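(* The Max-Util objective is subject to strict-improvement by a manipulator $m^-$ (one who can only hide existing edges) over undirected networks. That is, there exist a number $k$ of coalitions, an undirected social network $G=\langle A,E\rangle$, an agent $m\in A$ and a manipulation in which $m$ removes some of the edges of $G$ incident to $m$, producing the reported network $G^m$, such that \[\min_{P\in O(G^m)} u(m,P) \;>\; \max_{P\in O(G)} u(m,P),\] where $O(\cdot)$ denotes the set of Max-Util solutions and $u(m,P)$ is computed in the true network $G$.
   Context: Let $A=\{a_1,\dots,a_n\}$ be a finite nonempty set of agents and $G=\langle A,E\rangle$ a graph without self-loops (the social network). $N(a)$ is the set of neighbours of $a$ in $G$. For a coalition $C\subseteq A$ with $a\in C$, $u(a,C)=|C\cap N(a)|$. For $0<k\le n$, $\Pi_k$ is the set of partitions of $A$ into exactly $k$ nonempty coalitions; for $P\in\Pi_k$, $u(a,P)=u(a,C)$ where $C\in P$ contains $a$. The Max-Util objective: $O(G)$ is the set of $P\in\Pi_k$ maximizing $\sum_{a\in A}u(a,P)$ (utilities computed in $G$). A manipulator $m\in A$ of type $m^-$ in an undirected network may remove any subset of the edges incident to $m$; the resulting network is $G^m$. The utility $u(m,P)$ of the manipulator is always computed with respect to his true neighbours in the original $G$. *)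

theory Defs
  imports Main "HOL-Library.Disjoint_Sets"
begin

definition undirected_graph :: "'a set \<Rightarrow> 'a set set \<Rightarrow> bool" where
  "undirected_graph A E \<longleftrightarrow> (\<forall>e\<in>E. e \<subseteq> A \<and> card e = 2)"

definition nbrs :: "'a set set \<Rightarrow> 'a \<Rightarrow> 'a set" where
  "nbrs E a = {b. {a, b} \<in> E \<and> b \<noteq> a}"

definition coalition_of :: "'a set set \<Rightarrow> 'a \<Rightarrow> 'a set" where
  "coalition_of P a = (THE C. C \<in> P \<and> a \<in> C)"

definition util :: "'a set set \<Rightarrow> 'a set set \<Rightarrow> 'a \<Rightarrow> nat" where
  "util E P a = card (coalition_of P a \<inter> nbrs E a)"

definition Pi_k :: "'a set \<Rightarrow> nat \<Rightarrow> 'a set set set" where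
  "Pi_k A k = {P. partition_on A P \<and> card P = k}"

definition welfare :: "'a set \<Rightarrow> 'a set set \<Rightarrow> 'a set set \<Rightarrow> nat" where
  "welfare A E P = (\<Sum>a\<in>A. util E P a)"

definition maxutil :: "'a set \<Rightarrow> 'a set set \<Rightarrow> nat \<Rightarrow> 'a set set set" where
  "maxutil A E k = {P \<in> Pi_k A k. \<forall>Q \<in> Pi_k A k. welfare A E Q \<le> welfare A E P}"

definition minus_manipulation :: "'a set set \<Rightarrow> 'a \<Rightarrow> 'a set set \<Rightarrow> bool" where
  "minus_manipulation E m E' \<longleftrightarrow> E' \<subseteq> E \<and> (\<forall>e \<in> E - E'. m \<in> e)"

end

theory Submission
  imports Defs
begin

text \<open>
  The witness is a network on the eight agents 0..7 with fifteen edges, k = 4 and m = 0.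
  In a partition the welfare is twice the number of edges inside coalitions.  In the true
  network at most 8 edges can be internal to a partition into 4 coalitions (attained by
  {0,2,4,6,7} and three singletons), and every partition reaching 8 gives agent 0 at most 3
  neighbours in its coalition.  If agent 0 hides its edges to 4 and 7, at most 7 edges can be
  internal (attained by {0,1,3,5,6} and three singletons), and every partition reaching 7 puts
  agent 0 together with at least 4 of its true neighbours.  The two claims about all
  partitions are checked by enumerating partitions of {0..<8} as canonical labelings, which
  label every agent by the least member of its coalition.
\<close>

lemma coalition_of_eq:
  assumes "partition_on A P" "C \<in> P" "a \<in> C"
  shows "coalition_of P a = C"
  unfolding coalition_of_def
proof (rule the_equality)
  show "C \<in> P \<and> a \<in> C" using assms(2,3) ..
  show "D = C" if "D \<in> P \<and> a \<in> D" for D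
    using that assms partition_onD2[OF assms(1)] by (auto simp: disjoint_def)
qed

lemma coalition_of_in:
  assumes "partition_on A P" "a \<in> A"
  shows "coalition_of P a \<in> P" "a \<in> coalition_of P a"
proof -
  obtain C where "C \<in> P" "a \<in> C"
    using assms partition_onD1[OF assms(1)] by blast
  then show "coalition_of P a \<in> P" "a \<in> coalition_of P a"
    using coalition_of_eq[OF assms(1)] by simp_all
qed

lemma coalition_of_mem_eq:
  assumes "partition_on A P" "a \<in> A" "b \<in> coalition_of P a"
  shows "coalition_of P b = coalition_of P a"
  using coalition_of_eq[OF assms(1) coalition_of_in(1)[OF assms(1,2)] assms(3)] .

lemma image_coalition_of:
  assumes "partition_on A P"
  shows "coalition_of P ` A = P"
proof
  show "coalition_of P ` A \<subseteq> P"
    using coalition_of_in(1)[OF assms] by blast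
  show "P \<subseteq> coalition_of P ` A"
  proof
    fix C assume "C \<in> P"
    moreover obtain a where "a \<in> C"
      using \<open>C \<in> P\<close> partition_onD3[OF assms] by fastforce
    ultimately show "C \<in> coalition_of P ` A"
      using coalition_of_eq[OF assms] partition_onD1[OF assms] by blast
  qed
qed

definition label_partition :: "'a set \<Rightarrow> ('a \<Rightarrow> 'b) \<Rightarrow> 'a set set" where
  "label_partition A f = (\<lambda>a. {b \<in> A. f b = f a}) ` A"

lemma partition_on_label_partition: "partition_on A (label_partition A f)"
proof (rule partition_onI)
  show "\<Union> (label_partition A f) = A" "{} \<notin> label_partition A f"
    unfolding label_partition_def by blast+
  show "disjnt C D" if C: "C \<in> label_partition A f" and D: "D \<in> label_partition A f" and "C \<noteq> D" for C D
  proof -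
    obtain a b where "C = {x \<in> A. f x = f a}" "D = {x \<in> A. f x = f b}"
      using C D unfolding label_partition_def by blast
    with \<open>C \<noteq> D\<close> show ?thesis unfolding disjnt_def by auto
  qed
qed

lemma coalition_of_label_partition:
  assumes "a \<in> A"
  shows "coalition_of (label_partition A f) a = {b \<in> A. f b = f a}"
  by (rule coalition_of_eq[OF partition_on_label_partition]) (use assms in \<open>auto simp: label_partition_def\<close>)

lemma card_label_partition: "card (label_partition A f) = card (f ` A)"
proof -
  have "bij_betw (\<lambda>v. {b \<in> A. f b = v}) (f ` A) (label_partition A f)"
    unfolding label_partition_def by (rule bij_betw_imageI) (auto simp: inj_on_def)
  then show ?thesis by (simp add: bij_betw_same_card)
qed

lemma label_partition_cong:
  "(\<And>a. a \<in> A \<Longrightarrow> f a = g a) \<Longrightarrow> label_partition A f = label_partition A g"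
  unfolding label_partition_def by (intro image_cong) auto

lemma maxutil_eq_welfare_level_set:
  assumes "P\<^sub>0 \<in> Pi_k A k" "\<And>P. P \<in> Pi_k A k \<Longrightarrow> welfare A E P \<le> welfare A E P\<^sub>0"
  shows "maxutil A E k = {P \<in> Pi_k A k. welfare A E P = welfare A E P\<^sub>0}"
  using assms unfolding maxutil_def by (auto intro: antisym)

lemma finite_maxutil:
  assumes "finite A"
  shows "finite (maxutil A E k)"
proof (rule finite_subset)
  show "maxutil A E k \<subseteq> {P. partition_on A P}"
    unfolding maxutil_def Pi_k_def by blast
  show "finite {P. partition_on A P}"
    using assms by (rule finitely_many_partition_on)
qed

context
  fixes A :: "'a set" and E :: "'a set set" and k :: nat and P\<^sub>0 :: "'a set set"
  assumes finite: "finite A" and optimal: "P\<^sub>0 \<in> Pi_k A k"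
    "\<And>P. P \<in> Pi_k A k \<Longrightarrow> welfare A E P \<le> welfare A E P\<^sub>0"
begin

lemma Max_image_maxutil_le:
  assumes "\<And>P. P \<in> Pi_k A k \<Longrightarrow> welfare A E P = welfare A E P\<^sub>0 \<Longrightarrow> u P \<le> c"
  shows "Max (u ` maxutil A E k) \<le> c"
proof -
  have "maxutil A E k = {P \<in> Pi_k A k. welfare A E P = welfare A E P\<^sub>0}"
    by (rule maxutil_eq_welfare_level_set[OF optimal])
  then show ?thesis
    using finite_maxutil[OF finite, of E k] optimal(1) assms by (subst Max_le_iff) auto
qed

lemma Min_image_maxutil_ge:
  assumes "\<And>P. P \<in> Pi_k A k \<Longrightarrow> welfare A E P = welfare A E P\<^sub>0 \<Longrightarrow> c \<le> u P"
  shows "c \<le> Min (u ` maxutil A E k)"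
proof -
  have "maxutil A E k = {P \<in> Pi_k A k. welfare A E P = welfare A E P\<^sub>0}"
    by (rule maxutil_eq_welfare_level_set[OF optimal])
  then show ?thesis
    using finite_maxutil[OF finite, of E k] optimal(1) assms by (subst Min_ge_iff) auto
qed

end

lemma label_partition_in_Pi_k:
  "card (f ` A) = k \<Longrightarrow> label_partition A f \<in> Pi_k A k"
  unfolding Pi_k_def using partition_on_label_partition card_label_partition by auto

definition edge_set :: "('a \<times> 'a) list \<Rightarrow> 'a set set" where
  "edge_set es = (\<lambda>(a, b). {a, b}) ` set es"

definition arcs :: "('a \<times> 'a) list \<Rightarrow> ('a \<times> 'a) list" where
  "arcs es = es @ map prod.swap es"

definition internal_edges :: "('a \<times> 'a) list \<Rightarrow> ('a \<Rightarrow> 'b) \<Rightarrow> nat" where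
  "internal_edges es f = (\<Sum>(x, y)\<leftarrow>es. of_bool (f x = f y))"

definition internal_degree :: "('a \<times> 'a) list \<Rightarrow> ('a \<Rightarrow> 'b) \<Rightarrow> 'a \<Rightarrow> nat" where
  "internal_degree es f a = (\<Sum>(x, y)\<leftarrow>arcs es. of_bool (x = a \<and> f y = f a))"

lemma nbrs_edge_set:
  assumes "\<forall>(x, y) \<in> set es. x \<noteq> y"
  shows "nbrs (edge_set es) a = {b. (a, b) \<in> set (arcs es)}"
  using assms unfolding nbrs_def edge_set_def arcs_def by (force simp: doubleton_eq_iff)

lemma undirected_graph_edge_set:
  assumes "\<forall>(x, y) \<in> set es. x \<noteq> y" "\<forall>(x, y) \<in> set es. x \<in> A \<and> y \<in> A"
  shows "undirected_graph A (edge_set es)"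
  using assms unfolding undirected_graph_def edge_set_def by auto

lemma minus_manipulation_filter:
  assumes "\<And>a b. (a, b) \<in> set es \<Longrightarrow> \<not> keep (a, b) \<Longrightarrow> m = a \<or> m = b"
  shows "minus_manipulation (edge_set es) m (edge_set (filter keep es))"
  using assms unfolding minus_manipulation_def edge_set_def by fastforce

lemma length_filter_eq_sum_list: "length (filter P xs) = (\<Sum>x\<leftarrow>xs. of_bool (P x))"
  by (induction xs) simp_all

lemma util_edge_set:
  assumes loopfree: "\<forall>(x, y) \<in> set es. x \<noteq> y" and "distinct (arcs es)"
    and same: "\<And>b. (a, b) \<in> set (arcs es) \<Longrightarrow> b \<in> coalition_of P a \<longleftrightarrow> f b = f a"
  shows "util (edge_set es) P a = internal_degree es f a"
proof -
  define out where "out = filter (\<lambda>(x, y). x = a \<and> f y = f a) (arcs es)"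
  have "coalition_of P a \<inter> nbrs (edge_set es) a = snd ` set out"
    using same unfolding nbrs_edge_set[OF loopfree] out_def by force
  moreover have "inj_on snd (set out)"
    unfolding out_def by (auto simp: inj_on_def)
  moreover have "distinct out"
    unfolding out_def using assms(2) by simp
  ultimately have "util (edge_set es) P a = length out"
    unfolding util_def by (simp add: card_image distinct_card)
  also have "\<dots> = internal_degree es f a"
    unfolding out_def internal_degree_def length_filter_eq_sum_list by (simp add: case_prod_beta')
  finally show ?thesis .
qed

lemma sum_sum_list_swap: "(\<Sum>a\<in>A. \<Sum>p\<leftarrow>ps. g a p) = (\<Sum>p\<leftarrow>ps. \<Sum>a\<in>A. g a p)"
  by (induction ps) (simp_all add: sum.distrib)

lemma welfare_edge_set:
  assumes "finite A" and loopfree: "\<forall>(x, y) \<in> set es. x \<noteq> y" and "distinct (arcs es)"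
    and vertices: "\<forall>(x, y) \<in> set es. x \<in> A \<and> y \<in> A"
    and same: "\<And>a b. a \<in> A \<Longrightarrow> b \<in> A \<Longrightarrow> b \<in> coalition_of P a \<longleftrightarrow> f b = f a"
  shows "welfare A (edge_set es) P = 2 * internal_edges es f"
proof -
  have arcs_vertices: "\<forall>(x, y) \<in> set (arcs es). x \<in> A \<and> y \<in> A"
    using vertices by (auto simp: arcs_def)
  have "welfare A (edge_set es) P = (\<Sum>a\<in>A. internal_degree es f a)"
    unfolding welfare_def
  proof (rule sum.cong)
    show "util (edge_set es) P a = internal_degree es f a" if "a \<in> A" for a
      using util_edge_set[OF loopfree assms(3)] same[OF that] arcs_vertices by blast
  qed simp
  also have "\<dots> = (\<Sum>(x, y)\<leftarrow>arcs es. \<Sum>a\<in>A. of_bool (x = a \<and> f y = f a))"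
    unfolding internal_degree_def sum_sum_list_swap by (simp add: case_prod_beta')
  also have "\<dots> = (\<Sum>(x, y)\<leftarrow>arcs es. of_bool (f y = f x))"
  proof (rule arg_cong[where f = sum_list], rule map_cong[OF refl])
    fix p assume "p \<in> set (arcs es)"
    moreover obtain x y where p: "p = (x, y)" by fastforce
    ultimately have "x \<in> A" using arcs_vertices by auto
    have "(\<Sum>a\<in>A. of_bool (x = a \<and> f y = f a)) = (\<Sum>a\<in>A. if x = a then of_bool (f y = f x) else 0)"
      by (rule sum.cong) auto
    also have "\<dots> = of_bool (f y = f x)"
      using \<open>finite A\<close> \<open>x \<in> A\<close> by simp
    finally show "(\<lambda>(x, y). \<Sum>a\<in>A. of_bool (x = a \<and> f y = f a)) p = (\<lambda>(x, y). of_bool (f y = f x)) p"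
      unfolding p by simp
  qed
  also have "\<dots> = 2 * internal_edges es f"
    unfolding arcs_def internal_edges_def by (simp add: case_prod_beta' comp_def eq_commute)
  finally show ?thesis .
qed

context
  fixes A :: "'a set" and es :: "('a \<times> 'a) list"
  assumes loopfree: "\<forall>(x, y) \<in> set es. x \<noteq> y" and distinct_arcs: "distinct (arcs es)"
    and vertices: "\<forall>(x, y) \<in> set es. x \<in> A \<and> y \<in> A"
begin

lemma util_label_partition:
  assumes "a \<in> A"
  shows "util (edge_set es) (label_partition A f) a = internal_degree es f a"
proof (rule util_edge_set[OF loopfree distinct_arcs])
  fix b assume "(a, b) \<in> set (arcs es)"
  then have "b \<in> A"
    using vertices by (auto simp: arcs_def)
  then show "b \<in> coalition_of (label_partition A f) a \<longleftrightarrow> f b = f a"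
    using coalition_of_label_partition[OF assms, of f] by simp
qed

lemma welfare_label_partition:
  assumes "finite A"
  shows "welfare A (edge_set es) (label_partition A f) = 2 * internal_edges es f"
  by (rule welfare_edge_set[OF assms loopfree distinct_arcs vertices]) (simp add: coalition_of_label_partition)

end

definition block_min :: "nat set set \<Rightarrow> nat \<Rightarrow> nat" where
  "block_min P a = (LEAST b. b \<in> coalition_of P a)"

context
  fixes A :: "nat set" and P :: "nat set set"
  assumes partition: "partition_on A P"
begin

lemma block_min_mem: "a \<in> A \<Longrightarrow> block_min P a \<in> coalition_of P a"
  unfolding block_min_def using coalition_of_in(2)[OF partition] by (rule LeastI)

lemma block_min_le: "a \<in> A \<Longrightarrow> block_min P a \<le> a"
  unfolding block_min_def using coalition_of_in(2)[OF partition] by (rule Least_le)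

lemma block_min_eq_iff:
  assumes "a \<in> A" "b \<in> A"
  shows "block_min P b = block_min P a \<longleftrightarrow> b \<in> coalition_of P a"
proof
  assume "b \<in> coalition_of P a"
  then show "block_min P b = block_min P a"
    unfolding block_min_def using coalition_of_mem_eq[OF partition assms(1)] by simp
next
  assume eq: "block_min P b = block_min P a"
  have "coalition_of P (block_min P a) = coalition_of P a"
    using coalition_of_mem_eq[OF partition assms(1) block_min_mem[OF assms(1)]] .
  moreover have "coalition_of P (block_min P a) = coalition_of P b"
    using coalition_of_mem_eq[OF partition assms(2) block_min_mem[OF assms(2)]] eq by simp
  ultimately have "coalition_of P b = coalition_of P a" by simp
  then show "b \<in> coalition_of P a"
    using coalition_of_in(2)[OF partition assms(2)] by simp
qed

lemma block_min_in: "a \<in> A \<Longrightarrow> block_min P a \<in> A"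
  using block_min_mem coalition_of_in(1)[OF partition] partition_onD1[OF partition] by blast

lemma block_min_block_min: "a \<in> A \<Longrightarrow> block_min P (block_min P a) = block_min P a"
  using block_min_eq_iff[OF _ block_min_in] block_min_mem by blast

lemma card_block_min_fixed: "card {a \<in> A. block_min P a = a} = card P"
proof -
  have "{a \<in> A. block_min P a = a} = block_min P ` A"
    using block_min_in block_min_block_min by force
  also have "\<dots> = (\<lambda>C. LEAST b. b \<in> C) ` (coalition_of P ` A)"
    unfolding block_min_def image_image ..
  also have "\<dots> = (\<lambda>C. LEAST b. b \<in> C) ` P"
    unfolding image_coalition_of[OF partition] ..
  also have "card \<dots> = card P"
  proof (rule card_image, rule inj_onI)
    fix C D assume "C \<in> P" "D \<in> P" and eq: "(LEAST b. b \<in> C) = (LEAST b. b \<in> D)"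
    have "(LEAST b. b \<in> B) \<in> B" if "B \<in> P" for B
    proof -
      from \<open>B \<in> P\<close> obtain b where "b \<in> B"
        using partition_onD3[OF partition] by fastforce
      then show ?thesis by (rule LeastI)
    qed
    then have "(LEAST b. b \<in> C) \<in> C" "(LEAST b. b \<in> D) \<in> D"
      using \<open>C \<in> P\<close> \<open>D \<in> P\<close> by blast+
    then show "C = D"
      using \<open>C \<in> P\<close> \<open>D \<in> P\<close> eq partition_onD2[OF partition] by (auto simp: disjoint_def)
  qed
  finally show ?thesis .
qed

lemma label_partition_block_min: "label_partition A (block_min P) = P"
proof -
  have "{b \<in> A. block_min P b = block_min P a} = coalition_of P a" if "a \<in> A" for a
    using block_min_eq_iff[OF that] coalition_of_in(1)[OF partition that] partition_onD1[OF partition]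
    by blast
  then have "label_partition A (block_min P) = coalition_of P ` A"
    unfolding label_partition_def by simp
  then show ?thesis
    using image_coalition_of[OF partition] by simp
qed

end

text \<open>In a canonical labeling, \<open>xs ! i\<close> is the least member of the block containing \<open>i\<close>.\<close>

definition canonical_labeling :: "nat list \<Rightarrow> bool" where
  "canonical_labeling xs \<longleftrightarrow> (\<forall>i < length xs. xs ! i \<le> i \<and> xs ! (xs ! i) = xs ! i)"

definition fixed_points :: "nat list \<Rightarrow> nat set" where
  "fixed_points xs = {i. i < length xs \<and> xs ! i = i}"

lemma finite_fixed_points: "finite (fixed_points xs)"
  by (simp add: fixed_points_def)

lemma fixed_points_snoc:
  "fixed_points (xs @ [c]) = (if c = length xs then insert c (fixed_points xs) else fixed_points xs)"
  by (auto simp: fixed_points_def nth_append less_Suc_eq)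

lemma fixed_points_append_mono: "fixed_points xs \<subseteq> fixed_points (xs @ ys)"
  by (auto simp: fixed_points_def nth_append)

text \<open>
  \<open>all_labelings Q k r rs xs\<close>: \<open>Q\<close> holds for every canonical extension of \<open>xs\<close> by \<open>r\<close> labels
  with exactly \<open>k\<close> blocks, where \<open>rs\<close> lists the block labels already used by \<open>xs\<close>.
  Pruning is written with \<open>if\<close> so that the simplifier never enters a pruned branch.
\<close>

fun all_labelings :: "(nat list \<Rightarrow> bool) \<Rightarrow> nat \<Rightarrow> nat \<Rightarrow> nat list \<Rightarrow> nat list \<Rightarrow> bool" where
  "all_labelings Q k 0 rs xs = (if length rs = k then Q xs else True)"
| "all_labelings Q k (Suc r) rs xs =
     ((if length rs < k then all_labelings Q k r (length xs # rs) (xs @ [length xs]) else True) \<and>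
      list_all (\<lambda>c. all_labelings Q k r rs (xs @ [c])) rs)"

lemma all_labelings_sound:
  assumes "all_labelings Q k (length ys) rs xs" "canonical_labeling (xs @ ys)"
    and "set rs = fixed_points xs" "distinct rs" "card (fixed_points (xs @ ys)) = k"
  shows "Q (xs @ ys)"
  using assms
proof (induction ys arbitrary: rs xs)
  case Nil
  then have "length rs = k"
    using distinct_card by fastforce
  with Nil show ?case by simp
next
  case (Cons c ys)
  let ?n = "length xs"
  have "?n < length (xs @ c # ys)" by simp
  with Cons.prems(2) have "(xs @ c # ys) ! ?n \<le> ?n \<and> (xs @ c # ys) ! ((xs @ c # ys) ! ?n) = (xs @ c # ys) ! ?n"
    unfolding canonical_labeling_def by blast
  then have c_le: "c \<le> ?n" and c_fixed: "(xs @ c # ys) ! c = c" by simp_all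
  have snoc: "xs @ c # ys = (xs @ [c]) @ ys" by simp
  show ?case
  proof (cases "c = ?n")
    case True
    have rs': "set (?n # rs) = fixed_points (xs @ [c])"
      using Cons.prems(3) True by (simp add: fixed_points_snoc)
    have "?n \<notin> set rs"
      using Cons.prems(3) by (simp add: fixed_points_def)
    then have distinct': "distinct (?n # rs)"
      using Cons.prems(4) by simp
    have "card (fixed_points (xs @ [c])) \<le> k"
      using Cons.prems(5) card_mono[OF finite_fixed_points fixed_points_append_mono[of "xs @ [c]" ys]]
      unfolding snoc by simp
    then have "length rs < k"
      using rs' distinct_card[OF distinct'] by simp
    then have "all_labelings Q k (length ys) (?n # rs) (xs @ [c])"
      using Cons.prems(1) True by simp
    then show ?thesis
      using Cons.IH[of "?n # rs" "xs @ [c]"] rs' distinct' Cons.prems(2,5) unfolding snoc by blast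
  next
    case False
    then have "c < ?n" using c_le by simp
    then have "c \<in> set rs"
      using c_fixed Cons.prems(3) by (simp add: fixed_points_def nth_append)
    then have "all_labelings Q k (length ys) rs (xs @ [c])"
      using Cons.prems(1) by (simp add: list_all_iff)
    moreover have "set rs = fixed_points (xs @ [c])"
      using Cons.prems(3) False by (simp add: fixed_points_snoc)
    ultimately show ?thesis
      using Cons.IH Cons.prems(2,4,5) unfolding snoc by blast
  qed
qed

lemma canonical_labeling_block_min:
  assumes "partition_on {0..<n} P"
  shows "canonical_labeling (map (block_min P) [0..<n])"
  unfolding canonical_labeling_def
  using block_min_le[OF assms] block_min_in[OF assms] block_min_block_min[OF assms] by auto

lemma all_labelings_partition:
  assumes "all_labelings Q k n [] []" "P \<in> Pi_k {0..<n} k"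
  obtains xs where "Q xs" "P = label_partition {0..<n} (nth xs)"
proof
  have partition: "partition_on {0..<n} P" and "card P = k"
    using assms(2) unfolding Pi_k_def by auto
  let ?xs = "map (block_min P) [0..<n]"
  have "fixed_points ?xs = {a \<in> {0..<n}. block_min P a = a}"
    by (auto simp: fixed_points_def)
  then have "card (fixed_points ?xs) = k"
    using card_block_min_fixed[OF partition] \<open>card P = k\<close> by simp
  then show "Q ?xs"
    using all_labelings_sound[of Q k ?xs "[]" "[]"] assms(1) canonical_labeling_block_min[OF partition]
    by (simp add: fixed_points_def)
  have "label_partition {0..<n} (nth ?xs) = label_partition {0..<n} (block_min P)"
    by (rule label_partition_cong) simp
  then show "P = label_partition {0..<n} (nth ?xs)"
    using label_partition_block_min[OF partition] by simp
qed

definition example_edges :: "(nat \<times> nat) list" where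
  "example_edges =
    [(0,1), (0,3), (0,4), (0,5), (0,6), (0,7), (1,3), (1,6), (2,4), (2,6), (2,7), (3,5), (4,6), (5,7), (6,7)]"

definition reported_edges :: "(nat \<times> nat) list" where
  "reported_edges = filter (\<lambda>e. e \<notin> {(0,4), (0,7)}) example_edges"

lemma example_edges_simple:
  "\<forall>(x, y) \<in> set example_edges. x \<noteq> y" "distinct (arcs example_edges)"
  "\<forall>(x, y) \<in> set example_edges. x \<in> {0..<8} \<and> y \<in> {0..<8}"
  by (simp_all add: example_edges_def arcs_def)

lemma reported_edges_simple:
  "\<forall>(x, y) \<in> set reported_edges. x \<noteq> y" "distinct (arcs reported_edges)"
  "\<forall>(x, y) \<in> set reported_edges. x \<in> {0..<8} \<and> y \<in> {0..<8}"
  by (simp_all add: reported_edges_def example_edges_def arcs_def)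

definition example_check :: "nat list \<Rightarrow> bool" where
  "example_check xs \<longleftrightarrow>
     internal_edges example_edges (nth xs) \<le> 8 \<and>
     (internal_edges example_edges (nth xs) = 8 \<longrightarrow> internal_degree example_edges (nth xs) 0 \<le> 3) \<and>
     internal_edges reported_edges (nth xs) \<le> 7 \<and>
     (internal_edges reported_edges (nth xs) = 7 \<longrightarrow> 4 \<le> internal_degree example_edges (nth xs) 0)"

text \<open>
  Evaluating the check once on a symbolic list leaves only comparisons of numerals for each
  enumerated labeling.
\<close>

lemmas example_check_eval = example_check_def[of "[x0, x1, x2, x3, x4, x5, x6, x7]",
  unfolded internal_edges_def internal_degree_def arcs_def reported_edges_def example_edges_def, simplified]
  for x0 x1 x2 x3 x4 x5 x6 x7

text \<open>Stops the simplifier from unfolding the enumeration below a binder, before the labels are known.\<close>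

lemma list_all_weak_cong: "xs = ys \<Longrightarrow> list_all P xs = list_all P ys"
  by simp

lemma example_check_all_labelings: "all_labelings example_check 4 8 [] []"
  by (simp add: example_check_eval numeral_eq_Suc cong: list_all_weak_cong)

lemma example_partition_bounds:
  assumes "P \<in> Pi_k {0..<8} 4"
  shows "welfare {0..<8} (edge_set example_edges) P \<le> 16"
    and "welfare {0..<8} (edge_set example_edges) P = 16 \<Longrightarrow> util (edge_set example_edges) P 0 \<le> 3"
    and "welfare {0..<8} (edge_set reported_edges) P \<le> 14"
    and "welfare {0..<8} (edge_set reported_edges) P = 14 \<Longrightarrow> 4 \<le> util (edge_set example_edges) P 0"
proof -
  obtain xs where "example_check xs" and P: "P = label_partition {0..<8} (nth xs)"
    using all_labelings_partition[OF example_check_all_labelings assms] .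
  then show "welfare {0..<8} (edge_set example_edges) P \<le> 16"
    and "welfare {0..<8} (edge_set example_edges) P = 16 \<Longrightarrow> util (edge_set example_edges) P 0 \<le> 3"
    and "welfare {0..<8} (edge_set reported_edges) P \<le> 14"
    and "welfare {0..<8} (edge_set reported_edges) P = 14 \<Longrightarrow> 4 \<le> util (edge_set example_edges) P 0"
    unfolding example_check_def P
    welfare_label_partition[OF example_edges_simple finite_atLeastLessThan]
    welfare_label_partition[OF reported_edges_simple finite_atLeastLessThan]
    util_label_partition[OF example_edges_simple, of 0, simplified]
    by simp_all
qed

lemma example_optimum:
  shows "label_partition {0..<8} (nth [0,1,0,3,0,5,0,0::nat]) \<in> Pi_k {0..<8} 4"
    and "welfare {0..<8} (edge_set example_edges) (label_partition {0..<8} (nth [0,1,0,3,0,5,0,0::nat])) = 16"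
proof -
  show "label_partition {0..<8} (nth [0,1,0,3,0,5,0,0::nat]) \<in> Pi_k {0..<8} 4"
    by (rule label_partition_in_Pi_k) (simp add: atLeastLessThan_nat_numeral card_insert_if)
  show "welfare {0..<8} (edge_set example_edges) (label_partition {0..<8} (nth [0,1,0,3,0,5,0,0::nat])) = 16"
    unfolding welfare_label_partition[OF example_edges_simple finite_atLeastLessThan]
    by (simp add: internal_edges_def example_edges_def)
qed

lemma reported_optimum:
  shows "label_partition {0..<8} (nth [0,0,2,0,4,0,0,7::nat]) \<in> Pi_k {0..<8} 4"
    and "welfare {0..<8} (edge_set reported_edges) (label_partition {0..<8} (nth [0,0,2,0,4,0,0,7::nat])) = 14"
proof -
  show "label_partition {0..<8} (nth [0,0,2,0,4,0,0,7::nat]) \<in> Pi_k {0..<8} 4"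
    by (rule label_partition_in_Pi_k) (simp add: atLeastLessThan_nat_numeral card_insert_if)
  show "welfare {0..<8} (edge_set reported_edges) (label_partition {0..<8} (nth [0,0,2,0,4,0,0,7::nat])) = 14"
    unfolding welfare_label_partition[OF reported_edges_simple finite_atLeastLessThan]
    by (simp add: internal_edges_def reported_edges_def example_edges_def)
qed

theorem proposition1:
  shows "\<exists>(A :: nat set) (E :: nat set set) (m :: nat) (Em :: nat set set) (k :: nat).
    finite A \<and> A \<noteq> {} \<and> undirected_graph A E \<and> m \<in> A \<and> 0 < k \<and> k \<le> card A \<and>
    minus_manipulation E m Em \<and>
    Min ((\<lambda>P. util E P m) ` maxutil A Em k) > Max ((\<lambda>P. util E P m) ` maxutil A E k)"
proof (intro exI conjI)
  let ?E = "edge_set example_edges" and ?Em = "edge_set reported_edges"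
  show "finite {0..<8::nat}" "{0..<8::nat} \<noteq> {}" by simp_all
  show "undirected_graph {0..<8} ?E"
    using undirected_graph_edge_set example_edges_simple by blast
  show "(0::nat) \<in> {0..<8}" "0 < (4::nat)" "4 \<le> card {0..<8::nat}" by simp_all
  show "minus_manipulation ?E 0 ?Em"
    unfolding reported_edges_def by (rule minus_manipulation_filter) auto
  have "Max ((\<lambda>P. util ?E P 0) ` maxutil {0..<8} ?E 4) \<le> 3"
    by (rule Max_image_maxutil_le[OF _ example_optimum(1)])
      (use example_optimum(2) example_partition_bounds(1,2) in simp_all)
  moreover have "4 \<le> Min ((\<lambda>P. util ?E P 0) ` maxutil {0..<8} ?Em 4)"
    by (rule Min_image_maxutil_ge[OF _ reported_optimum(1)])
      (use reported_optimum(2) example_partition_bounds(3,4) in simp_all)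
  ultimately show "Min ((\<lambda>P. util ?E P 0) ` maxutil {0..<8} ?Em 4) > Max ((\<lambda>P. util ?E P 0) ` maxutil {0..<8} ?E 4)"
    by simp
qed

end
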